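(* Let $M$ be a principally Goldie*-lifting right $R$-module having the summand sum property. Then every direct summand of $M$ is principally Goldie*-lifting.
   Context: $R$ is an associative ring with identity; modules are unital right $R$-modules. $M$ has the summand sum property (SSP) if the sum of any two direct summands of $M$ is a direct summand of $M$. $K\ll L$ means $K$ is small in $L$. For submodules $X,Y$ of a module $L$, $X\,\beta^*\,Y$ means $(X+Y)/X\ll L/X$ and $(X+Y)/Y\ll L/Y$. A module $L$ is principally Goldie*-lifting if for every cyclic submodule $X$ of $L$ there is a direct summand $D$ of $L$ with $X\,\beta^*\,D$. *)

theory Defs
  imports Main
begin

record ('r, 'm) rmod =
  mcarrier :: "'m set"
  mzero :: 'm
  madd :: "'m \<Rightarrow> 'm \<Rightarrow> 'm"
  mneg :: "'m \<Rightarrow> 'm"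
  msmul :: "'m \<Rightarrow> 'r \<Rightarrow> 'm"

definition right_module :: "('r::ring_1, 'm) rmod \<Rightarrow> bool" where
  "right_module M \<longleftrightarrow>
     mzero M \<in> mcarrier M \<and>
     (\<forall>x\<in>mcarrier M. \<forall>y\<in>mcarrier M. madd M x y \<in> mcarrier M) \<and>
     (\<forall>x\<in>mcarrier M. mneg M x \<in> mcarrier M) \<and>
     (\<forall>x\<in>mcarrier M. \<forall>r. msmul M x r \<in> mcarrier M) \<and>
     (\<forall>x\<in>mcarrier M. \<forall>y\<in>mcarrier M. \<forall>z\<in>mcarrier M.
        madd M (madd M x y) z = madd M x (madd M y z)) \<and>
     (\<forall>x\<in>mcarrier M. \<forall>y\<in>mcarrier M. madd M x y = madd M y x) \<and>
     (\<forall>x\<in>mcarrier M. madd M (mzero M) x = x) \<and>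
     (\<forall>x\<in>mcarrier M. madd M (mneg M x) x = mzero M) \<and>
     (\<forall>x\<in>mcarrier M. msmul M x 1 = x) \<and>
     (\<forall>x\<in>mcarrier M. \<forall>r s. msmul M (msmul M x r) s = msmul M x (r * s)) \<and>
     (\<forall>x\<in>mcarrier M. \<forall>y\<in>mcarrier M. \<forall>r.
        msmul M (madd M x y) r = madd M (msmul M x r) (msmul M y r)) \<and>
     (\<forall>x\<in>mcarrier M. \<forall>r s.
        msmul M x (r + s) = madd M (msmul M x r) (msmul M x s))"

definition submodule :: "('r, 'm) rmod \<Rightarrow> 'm set \<Rightarrow> bool" where
  "submodule M X \<longleftrightarrow> X \<subseteq> mcarrier M \<and> mzero M \<in> X \<and>
     (\<forall>x\<in>X. \<forall>y\<in>X. madd M x y \<in> X) \<and> (\<forall>x\<in>X. mneg M x \<in> X) \<and>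
     (\<forall>x\<in>X. \<forall>r. msmul M x r \<in> X)"

definition msum :: "('r, 'm) rmod \<Rightarrow> 'm set \<Rightarrow> 'm set \<Rightarrow> 'm set" where
  "msum M X Y = {madd M x y | x y. x \<in> X \<and> y \<in> Y}"

definition small :: "('r, 'm) rmod \<Rightarrow> 'm set \<Rightarrow> bool" where
  "small M K \<longleftrightarrow> submodule M K \<and>
     (\<forall>N. submodule M N \<and> msum M K N = mcarrier M \<longrightarrow> N = mcarrier M)"

definition direct_summand :: "('r, 'm) rmod \<Rightarrow> 'm set \<Rightarrow> bool" where
  "direct_summand M D \<longleftrightarrow> submodule M D \<and>
     (\<exists>E. submodule M E \<and> msum M D E = mcarrier M \<and> D \<inter> E = {mzero M})"

definition SSP :: "('r, 'm) rmod \<Rightarrow> bool" where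
  "SSP M \<longleftrightarrow> (\<forall>D1 D2. direct_summand M D1 \<and> direct_summand M D2 \<longrightarrow>
                          direct_summand M (msum M D1 D2))"

definition cyclic_submodule :: "('r, 'm) rmod \<Rightarrow> 'm set \<Rightarrow> bool" where
  "cyclic_submodule M X \<longleftrightarrow> (\<exists>x\<in>mcarrier M. X = {msmul M x r | r. True})"

definition coset :: "('r, 'm) rmod \<Rightarrow> 'm set \<Rightarrow> 'm \<Rightarrow> 'm set" where
  "coset M X a = {madd M a x | x. x \<in> X}"

definition quot :: "('r, 'm) rmod \<Rightarrow> 'm set \<Rightarrow> ('r, 'm set) rmod" where
  "quot M X = \<lparr> mcarrier = coset M X ` mcarrier M,
               mzero = X,
               madd = (\<lambda>A B. coset M X (madd M (SOME a. a \<in> A) (SOME b. b \<in> B))),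
               mneg = (\<lambda>A. coset M X (mneg M (SOME a. a \<in> A))),
               msmul = (\<lambda>A r. coset M X (msmul M (SOME a. a \<in> A) r)) \<rparr>"

definition beta_star :: "('r, 'm) rmod \<Rightarrow> 'm set \<Rightarrow> 'm set \<Rightarrow> bool" where
  "beta_star M X Y \<longleftrightarrow>
     small (quot M X) (coset M X ` msum M X Y) \<and>
     small (quot M Y) (coset M Y ` msum M X Y)"

definition principally_goldie_star_lifting :: "('r, 'm) rmod \<Rightarrow> bool" where
  "principally_goldie_star_lifting M \<longleftrightarrow>
     (\<forall>X. cyclic_submodule M X \<longrightarrow> (\<exists>D. direct_summand M D \<and> beta_star M X D))"

definition submod :: "('r, 'm) rmod \<Rightarrow> 'm set \<Rightarrow> ('r, 'm) rmod" where
  "submod M D = M\<lparr>mcarrier := D\<rparr>"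

end

theory Submission
  imports Defs
begin

(* Fix a complement E0 of D and a cyclic submodule X of D.  Since X is cyclic in
   M, there is a direct summand P of M with X beta* P.  By SSP, P + E0 is a direct summand of
   M, say with complement E.  Then D' = D \<inter> (P + E0) is a direct summand of D (with complement
   D \<inter> (E + E0)) and D' + E0 = P + E0 (modular law).  Finally X beta* D' holds in D: a
   submodule L \<le> D witnessing the failure of smallness in D yields L + E0 witnessing it in M. *)

locale rmodule =
  fixes M :: "('r::ring_1, 'm) rmod"
  assumes rm: "right_module M"
begin

lemma zero_closed[simp, intro]: "mzero M \<in> mcarrier M"
  using rm unfolding right_module_def by auto
lemma add_closed[simp, intro]:
  "x \<in> mcarrier M \<Longrightarrow> y \<in> mcarrier M \<Longrightarrow> madd M x y \<in> mcarrier M"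
  using rm unfolding right_module_def by auto
lemma neg_closed[simp, intro]: "x \<in> mcarrier M \<Longrightarrow> mneg M x \<in> mcarrier M"
  using rm unfolding right_module_def by auto
lemma smul_closed[simp, intro]: "x \<in> mcarrier M \<Longrightarrow> msmul M x r \<in> mcarrier M"
  using rm unfolding right_module_def by auto
lemma add_assoc:
  "x \<in> mcarrier M \<Longrightarrow> y \<in> mcarrier M \<Longrightarrow> z \<in> mcarrier M \<Longrightarrow>
   madd M (madd M x y) z = madd M x (madd M y z)"
  using rm unfolding right_module_def by auto
lemma add_comm: "x \<in> mcarrier M \<Longrightarrow> y \<in> mcarrier M \<Longrightarrow> madd M x y = madd M y x"
  using rm unfolding right_module_def by auto
lemma zero_left[simp]: "x \<in> mcarrier M \<Longrightarrow> madd M (mzero M) x = x"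
  using rm unfolding right_module_def by auto
lemma neg_left[simp]: "x \<in> mcarrier M \<Longrightarrow> madd M (mneg M x) x = mzero M"
  using rm unfolding right_module_def by auto
lemma smul_smul: "x \<in> mcarrier M \<Longrightarrow> msmul M (msmul M x r) s = msmul M x (r * s)"
  using rm unfolding right_module_def by auto
lemma smul_add_left:
  "x \<in> mcarrier M \<Longrightarrow> y \<in> mcarrier M \<Longrightarrow>
   msmul M (madd M x y) r = madd M (msmul M x r) (msmul M y r)"
  using rm unfolding right_module_def by auto
lemma smul_add_right:
  "x \<in> mcarrier M \<Longrightarrow> msmul M x (r + s) = madd M (msmul M x r) (msmul M x s)"
  using rm unfolding right_module_def by auto

lemma zero_right[simp]: "x \<in> mcarrier M \<Longrightarrow> madd M x (mzero M) = x"
  by (metis add_comm zero_left zero_closed)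
lemma neg_right[simp]: "x \<in> mcarrier M \<Longrightarrow> madd M x (mneg M x) = mzero M"
  by (metis add_comm neg_left neg_closed)
lemma neg_add_cancel[simp]:
  "x \<in> mcarrier M \<Longrightarrow> y \<in> mcarrier M \<Longrightarrow> madd M (mneg M x) (madd M x y) = y"
  by (metis add_assoc neg_left zero_left neg_closed)
lemma add_neg_cancel[simp]:
  "x \<in> mcarrier M \<Longrightarrow> y \<in> mcarrier M \<Longrightarrow> madd M x (madd M (mneg M x) y) = y"
  by (metis add_assoc neg_right zero_left neg_closed)
lemma add_neg_cancel_right[simp]:
  "x \<in> mcarrier M \<Longrightarrow> y \<in> mcarrier M \<Longrightarrow> madd M (madd M x y) (mneg M y) = x"
  by (metis add_assoc neg_right zero_right neg_closed)

lemma neg_unique: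
  "x \<in> mcarrier M \<Longrightarrow> y \<in> mcarrier M \<Longrightarrow> madd M x y = mzero M \<Longrightarrow> y = mneg M x"
  by (metis neg_add_cancel zero_right neg_closed)

lemma add_swap:
  "a \<in> mcarrier M \<Longrightarrow> b \<in> mcarrier M \<Longrightarrow> c \<in> mcarrier M \<Longrightarrow> d \<in> mcarrier M \<Longrightarrow>
   madd M (madd M a b) (madd M c d) = madd M (madd M a c) (madd M b d)"
  by (metis add_assoc add_comm add_closed)

lemma neg_add:
  assumes x: "x \<in> mcarrier M" and y: "y \<in> mcarrier M"
  shows "mneg M (madd M x y) = madd M (mneg M x) (mneg M y)"
proof -
  have "madd M (madd M x y) (madd M (mneg M x) (mneg M y)) =
        madd M (madd M x (mneg M x)) (madd M y (mneg M y))"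
    using add_swap[of x y "mneg M x" "mneg M y"] x y by simp
  also have "\<dots> = mzero M" using x y by simp
  finally show ?thesis using x y neg_unique by (metis add_closed neg_closed)
qed

lemma smul_zero: assumes x: "x \<in> mcarrier M" shows "msmul M x 0 = mzero M"
proof -
  have "msmul M x 0 = madd M (msmul M x 0) (msmul M x 0)"
    using smul_add_right[OF x, of 0 0] by simp
  then show ?thesis using x by (metis add_neg_cancel_right neg_right smul_closed)
qed

lemma smul_neg: assumes x: "x \<in> mcarrier M" shows "mneg M (msmul M x r) = msmul M x (- r)"
proof -
  have "madd M (msmul M x r) (msmul M x (- r)) = mzero M"
    using smul_add_right[OF x, of r "- r"] smul_zero[OF x] by simp
  then show ?thesis using x neg_unique by (metis smul_closed)
qed

end

lemma msumE:
  "z \<in> msum M A B \<Longrightarrow> (\<And>a b. z = madd M a b \<Longrightarrow> a \<in> A \<Longrightarrow> b \<in> B \<Longrightarrow> P) \<Longrightarrow> P"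
  unfolding msum_def by blast

lemma msumI: "a \<in> A \<Longrightarrow> b \<in> B \<Longrightarrow> madd M a b \<in> msum M A B"
  unfolding msum_def by blast

lemma msum_mono: "A \<subseteq> A' \<Longrightarrow> B \<subseteq> B' \<Longrightarrow> msum M A B \<subseteq> msum M A' B'"
  unfolding msum_def by blast

context rmodule
begin

lemma submoduleD:
  assumes "submodule M X"
  shows "X \<subseteq> mcarrier M" "mzero M \<in> X"
    "\<And>x y. x \<in> X \<Longrightarrow> y \<in> X \<Longrightarrow> madd M x y \<in> X"
    "\<And>x. x \<in> X \<Longrightarrow> mneg M x \<in> X" "\<And>x r. x \<in> X \<Longrightarrow> msmul M x r \<in> X"
  using assms unfolding submodule_def by auto

lemma submodule_Int: "submodule M A \<Longrightarrow> submodule M B \<Longrightarrow> submodule M (A \<inter> B)"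
  unfolding submodule_def by auto

lemma submodule_msum:
  assumes A: "submodule M A" and B: "submodule M B"
  shows "submodule M (msum M A B)"
proof -
  note a = submoduleD[OF A] and b = submoduleD[OF B]
  show ?thesis
    unfolding submodule_def
  proof (intro conjI ballI allI)
    show "msum M A B \<subseteq> mcarrier M" using a(1) b(1) by (auto elim!: msumE)
    show "mzero M \<in> msum M A B"
      using msumI[OF a(2) b(2), of M] by simp
  next
    fix x y assume "x \<in> msum M A B" "y \<in> msum M A B"
    then obtain a1 b1 a2 b2 where "x = madd M a1 b1" "y = madd M a2 b2"
        "a1 \<in> A" "b1 \<in> B" "a2 \<in> A" "b2 \<in> B"
      by (auto elim!: msumE)
    moreover have "madd M (madd M a1 b1) (madd M a2 b2) = madd M (madd M a1 a2) (madd M b1 b2)"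
      using calculation a(1) b(1) by (intro add_swap) auto
    ultimately show "madd M x y \<in> msum M A B"
      using a(3) b(3) by (simp add: msumI)
  next
    fix x assume "x \<in> msum M A B"
    then obtain a1 b1 where "x = madd M a1 b1" "a1 \<in> A" "b1 \<in> B" by (rule msumE)
    moreover have "mneg M (madd M a1 b1) = madd M (mneg M a1) (mneg M b1)"
      using calculation a(1) b(1) by (intro neg_add) auto
    ultimately show "mneg M x \<in> msum M A B"
      using a(4) b(4) by (simp add: msumI)
  next
    fix x r assume "x \<in> msum M A B"
    then obtain a1 b1 where "x = madd M a1 b1" "a1 \<in> A" "b1 \<in> B" by (rule msumE)
    moreover have "msmul M (madd M a1 b1) r = madd M (msmul M a1 r) (msmul M b1 r)"
      using calculation a(1) b(1) by (intro smul_add_left) auto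
    ultimately show "msmul M x r \<in> msum M A B"
      using a(5) b(5) by (simp add: msumI)
  qed
qed

lemma msum_least: "submodule M T \<Longrightarrow> A \<subseteq> T \<Longrightarrow> B \<subseteq> T \<Longrightarrow> msum M A B \<subseteq> T"
  using submoduleD(3)[of T] by (auto elim!: msumE)

lemma msum_upper1:
  assumes B: "submodule M B" and A: "A \<subseteq> mcarrier M" shows "A \<subseteq> msum M A B"
proof
  fix a assume a: "a \<in> A"
  have "madd M a (mzero M) \<in> msum M A B" using msumI a submoduleD(2)[OF B] .
  then show "a \<in> msum M A B" using a A by auto
qed

lemma msum_upper2:
  assumes A: "submodule M A" and B: "B \<subseteq> mcarrier M" shows "B \<subseteq> msum M A B"
proof
  fix b assume b: "b \<in> B"
  have "madd M (mzero M) b \<in> msum M A B" using msumI submoduleD(2)[OF A] b .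
  then show "b \<in> msum M A B" using b B by auto
qed

lemma msum_carrier: "A \<subseteq> mcarrier M \<Longrightarrow> B \<subseteq> mcarrier M \<Longrightarrow> msum M A B \<subseteq> mcarrier M"
  by (auto elim!: msumE)

lemma msum_comm_subset:
  assumes "A \<subseteq> mcarrier M" "B \<subseteq> mcarrier M" shows "msum M A B \<subseteq> msum M B A"
proof
  fix z assume "z \<in> msum M A B"
  then obtain a b where z: "z = madd M a b" "a \<in> A" "b \<in> B" by (rule msumE)
  then have "z = madd M b a" using assms add_comm by blast
  then show "z \<in> msum M B A" using z msumI by metis
qed

lemma msum_comm: "A \<subseteq> mcarrier M \<Longrightarrow> B \<subseteq> mcarrier M \<Longrightarrow> msum M A B = msum M B A"
  by (simp add: msum_comm_subset subset_antisym)

lemma msum_zero: "A \<subseteq> mcarrier M \<Longrightarrow> msum M A {mzero M} = A"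
  unfolding msum_def by force

lemma modular:
  assumes A: "submodule M A" and B: "submodule M B" and C: "submodule M C" and AC: "A \<subseteq> C"
  shows "C \<inter> msum M A B = msum M A (C \<inter> B)"
proof
  show "C \<inter> msum M A B \<subseteq> msum M A (C \<inter> B)"
  proof
    fix z assume "z \<in> C \<inter> msum M A B"
    then obtain a b where z: "z \<in> C" "z = madd M a b" "a \<in> A" "b \<in> B"
      by (auto elim!: msumE)
    have "a \<in> mcarrier M" "b \<in> mcarrier M" using z submoduleD(1)[OF A] submoduleD(1)[OF B] by auto
    then have "b = madd M (mneg M a) z" using z by simp
    moreover have "madd M (mneg M a) z \<in> C" using z AC submoduleD[OF C] by auto
    ultimately show "z \<in> msum M A (C \<inter> B)" using z by (simp add: msumI)
  qed
  show "msum M A (C \<inter> B) \<subseteq> C \<inter> msum M A B"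
    using AC submoduleD(3)[OF C] by (auto elim!: msumE intro: msumI)
qed

lemma cyclic_submodule_is_submodule:
  assumes "cyclic_submodule M X" shows "submodule M X"
proof -
  obtain x where x: "x \<in> mcarrier M" "X = {msmul M x r | r. True}"
    using assms unfolding cyclic_submodule_def by blast
  have "mzero M \<in> X" using x smul_zero[OF x(1)] by (metis (mono_tags, lifting) mem_Collect_eq)
  then show ?thesis
    using x unfolding submodule_def
    by (auto simp: smul_add_right[symmetric] smul_neg smul_smul)
qed

section \<open>Quotient modules\<close>

lemma coset_iff: "b \<in> coset M X a \<longleftrightarrow> (\<exists>x\<in>X. b = madd M a x)"
  unfolding coset_def by blast

lemma coset_self:
  assumes X: "submodule M X" and a: "a \<in> mcarrier M" shows "a \<in> coset M X a"
  unfolding coset_iff using submoduleD(2)[OF X] zero_right[OF a] by (intro bexI[of _ "mzero M"]) auto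

lemma coset_zero:
  assumes X: "submodule M X" shows "coset M X (mzero M) = X"
proof -
  have "madd M (mzero M) x = x" if "x \<in> X" for x using that submoduleD(1)[OF X] by auto
  then show ?thesis unfolding coset_def by force
qed

lemma coset_eq:
  assumes X: "submodule M X" and a: "a \<in> mcarrier M" and b: "b \<in> coset M X a"
  shows "coset M X b = coset M X a"
proof -
  note s = submoduleD[OF X]
  obtain x where x: "x \<in> X" "b = madd M a x" using b coset_iff by auto
  have xc: "x \<in> mcarrier M" using x s(1) by auto
  show ?thesis
  proof
    show "coset M X b \<subseteq> coset M X a"
    proof
      fix z assume "z \<in> coset M X b"
      then obtain y where y: "y \<in> X" "z = madd M b y" using coset_iff by auto
      have "z = madd M a (madd M x y)" using y x xc a s(1) add_assoc by auto
      then show "z \<in> coset M X a" using coset_iff s(3) x y by auto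
    qed
    show "coset M X a \<subseteq> coset M X b"
    proof
      fix z assume "z \<in> coset M X a"
      then obtain y where y: "y \<in> X" "z = madd M a y" using coset_iff by auto
      have "y \<in> mcarrier M" using y s(1) by auto
      then have "z = madd M b (madd M (mneg M x) y)" using y x xc a add_assoc by simp
      then show "z \<in> coset M X b" using coset_iff s x y by auto
    qed
  qed
qed

text \<open>The quotient operations are defined through a chosen representative (SOME) of each
  coset; the following lemmas show that any representative gives the same result.\<close>
lemma coset_some:
  assumes "submodule M X" "a \<in> mcarrier M"
  obtains x where "x \<in> X" "(SOME c. c \<in> coset M X a) = madd M a x"
  using someI[of "\<lambda>c. c \<in> coset M X a", OF coset_self[OF assms]] coset_iff by blast

lemma quot_add:
  assumes X: "submodule M X" and a: "a \<in> mcarrier M" and b: "b \<in> mcarrier M"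
  shows "madd (quot M X) (coset M X a) (coset M X b) = coset M X (madd M a b)"
proof -
  note s = submoduleD[OF X]
  obtain x where x: "x \<in> X" "(SOME c. c \<in> coset M X a) = madd M a x" using coset_some[OF X a] .
  obtain y where y: "y \<in> X" "(SOME c. c \<in> coset M X b) = madd M b y" using coset_some[OF X b] .
  have "madd M (madd M a x) (madd M b y) = madd M (madd M a b) (madd M x y)"
    using a b x(1) y(1) s(1) by (intro add_swap) auto
  then have "madd M (madd M a x) (madd M b y) \<in> coset M X (madd M a b)"
    using coset_iff s(3) x y by auto
  then have "coset M X (madd M (madd M a x) (madd M b y)) = coset M X (madd M a b)"
    using coset_eq[OF X] a b by blast
  then show ?thesis using x y by (simp add: quot_def)
qed

lemma quot_neg:
  assumes X: "submodule M X" and a: "a \<in> mcarrier M"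
  shows "mneg (quot M X) (coset M X a) = coset M X (mneg M a)"
proof -
  note s = submoduleD[OF X]
  obtain x where x: "x \<in> X" "(SOME c. c \<in> coset M X a) = madd M a x" using coset_some[OF X a] .
  have "mneg M (madd M a x) = madd M (mneg M a) (mneg M x)"
    using a x(1) s(1) by (intro neg_add) auto
  then have "mneg M (madd M a x) \<in> coset M X (mneg M a)"
    using coset_iff s(4) x(1) by auto
  then have "coset M X (mneg M (madd M a x)) = coset M X (mneg M a)"
    using coset_eq[OF X] a by blast
  then show ?thesis using x by (simp add: quot_def)
qed

lemma quot_smul:
  assumes X: "submodule M X" and a: "a \<in> mcarrier M"
  shows "msmul (quot M X) (coset M X a) r = coset M X (msmul M a r)"
proof -
  note s = submoduleD[OF X]
  obtain x where x: "x \<in> X" "(SOME c. c \<in> coset M X a) = madd M a x" using coset_some[OF X a] .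
  have "msmul M (madd M a x) r = madd M (msmul M a r) (msmul M x r)"
    using a x(1) s(1) by (intro smul_add_left) auto
  then have "msmul M (madd M a x) r \<in> coset M X (msmul M a r)"
    using coset_iff s(5) x(1) by auto
  then have "coset M X (msmul M (madd M a x) r) = coset M X (msmul M a r)"
    using coset_eq[OF X] a by blast
  then show ?thesis using x by (simp add: quot_def)
qed

lemma quot_carrier[simp]: "mcarrier (quot M X) = coset M X ` mcarrier M"
  by (simp add: quot_def)

lemma quot_zero[simp]: "mzero (quot M X) = X"
  by (simp add: quot_def)

lemma submodule_quot_image:
  assumes X: "submodule M X" and L: "submodule M L"
  shows "submodule (quot M X) (coset M X ` L)"
proof -
  note l = submoduleD[OF L]
  show ?thesis
    unfolding submodule_def
  proof (intro conjI ballI allI)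
    show "coset M X ` L \<subseteq> mcarrier (quot M X)" using l(1) by auto
    show "mzero (quot M X) \<in> coset M X ` L" using l(2) coset_zero[OF X] by force
  next
    fix A B assume "A \<in> coset M X ` L" "B \<in> coset M X ` L"
    then obtain a b where "A = coset M X a" "B = coset M X b" "a \<in> L" "b \<in> L" by blast
    moreover have "madd (quot M X) (coset M X a) (coset M X b) = coset M X (madd M a b)"
      using calculation l(1) by (intro quot_add[OF X]) auto
    ultimately show "madd (quot M X) A B \<in> coset M X ` L" using l(3) by simp
  next
    fix A assume "A \<in> coset M X ` L"
    then obtain a where "A = coset M X a" "a \<in> L" by blast
    moreover have "mneg (quot M X) (coset M X a) = coset M X (mneg M a)"
      using calculation l(1) by (intro quot_neg[OF X]) auto
    ultimately show "mneg (quot M X) A \<in> coset M X ` L" using l(4) by simp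
  next
    fix A r assume "A \<in> coset M X ` L"
    then obtain a where "A = coset M X a" "a \<in> L" by blast
    moreover have "msmul (quot M X) (coset M X a) r = coset M X (msmul M a r)"
      using calculation l(1) by (intro quot_smul[OF X]) auto
    ultimately show "msmul (quot M X) A r \<in> coset M X ` L" using l(5) by simp
  qed
qed

lemma quot_submodule_preimage:
  assumes X: "submodule M X" and N: "submodule (quot M X) N"
  obtains L where "submodule M L" "X \<subseteq> L" "N = coset M X ` L"
proof -
  have Nc: "N \<subseteq> coset M X ` mcarrier M" and nz: "X \<in> N"
    and nadd: "\<And>A B. A \<in> N \<Longrightarrow> B \<in> N \<Longrightarrow> madd (quot M X) A B \<in> N"
    and nneg: "\<And>A. A \<in> N \<Longrightarrow> mneg (quot M X) A \<in> N"
    and nsmul: "\<And>A r. A \<in> N \<Longrightarrow> msmul (quot M X) A r \<in> N"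
    using N unfolding submodule_def by simp_all
  define L where "L = {m \<in> mcarrier M. coset M X m \<in> N}"
  have "submodule M L"
    unfolding submodule_def
  proof (intro conjI ballI allI)
    show "L \<subseteq> mcarrier M" unfolding L_def by blast
    show "mzero M \<in> L" unfolding L_def using nz coset_zero[OF X] by simp
  next
    fix x y assume "x \<in> L" "y \<in> L"
    then show "madd M x y \<in> L" using nadd[of "coset M X x" "coset M X y"] quot_add[OF X]
      unfolding L_def by simp
  next
    fix x assume "x \<in> L"
    then show "mneg M x \<in> L" using nneg[of "coset M X x"] quot_neg[OF X]
      unfolding L_def by simp
  next
    fix x r assume "x \<in> L"
    then show "msmul M x r \<in> L" using nsmul[of "coset M X x" r] quot_smul[OF X]
      unfolding L_def by simp
  qed
  moreover have "X \<subseteq> L"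
  proof
    fix x assume x: "x \<in> X"
    then have "x \<in> coset M X (mzero M)" using coset_zero[OF X] by simp
    then have "coset M X x = X" using coset_eq[OF X zero_closed] coset_zero[OF X] by simp
    then show "x \<in> L" using x submoduleD(1)[OF X] nz unfolding L_def by auto
  qed
  moreover have "N = coset M X ` L" using Nc unfolding L_def by auto
  ultimately show ?thesis by (rule that)
qed

lemma coset_image_eq_carrier:
  assumes X: "submodule M X" and L: "submodule M L" and XL: "X \<subseteq> L"
    and eq: "coset M X ` L = coset M X ` mcarrier M"
  shows "L = mcarrier M"
proof
  show "L \<subseteq> mcarrier M" using submoduleD(1)[OF L] .
  show "mcarrier M \<subseteq> L"
  proof
    fix m assume m: "m \<in> mcarrier M"
    then obtain l where l: "coset M X m = coset M X l" "l \<in> L" using eq by blast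
    then have "m \<in> coset M X l" using coset_self[OF X m] by simp
    then show "m \<in> L" using l(2) XL submoduleD(3)[OF L] by (auto simp: coset_iff)
  qed
qed

lemma msum_quot:
  assumes X: "submodule M X" and K: "K \<subseteq> mcarrier M" and L: "L \<subseteq> mcarrier M"
  shows "msum (quot M X) (coset M X ` K) (coset M X ` L) = coset M X ` msum M K L"
proof
  show "msum (quot M X) (coset M X ` K) (coset M X ` L) \<subseteq> coset M X ` msum M K L"
  proof
    fix z assume "z \<in> msum (quot M X) (coset M X ` K) (coset M X ` L)"
    then obtain k l where "z = madd (quot M X) (coset M X k) (coset M X l)" "k \<in> K" "l \<in> L"
      by (auto elim!: msumE)
    moreover then have "z = coset M X (madd M k l)" using quot_add[OF X] K L by blast
    ultimately show "z \<in> coset M X ` msum M K L" by (blast intro: msumI)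
  qed
  show "coset M X ` msum M K L \<subseteq> msum (quot M X) (coset M X ` K) (coset M X ` L)"
  proof
    fix z assume "z \<in> coset M X ` msum M K L"
    then obtain k l where "z = coset M X (madd M k l)" "k \<in> K" "l \<in> L"
      by (auto elim!: msumE)
    moreover then have "z = madd (quot M X) (coset M X k) (coset M X l)"
      using quot_add[OF X] K L by blast
    ultimately show "z \<in> msum (quot M X) (coset M X ` K) (coset M X ` L)"
      by (metis imageI msumI)
  qed
qed

end

section \<open>Smallness in a quotient, without quotients\<close>

text \<open>small_over M X K says that K/X is small in M/X (for X \<le> K): the only submodule L
  containing X with K + L = M is M itself.\<close>
definition small_over :: "('r, 'm) rmod \<Rightarrow> 'm set \<Rightarrow> 'm set \<Rightarrow> bool" where
  "small_over M X K \<longleftrightarrow>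
     (\<forall>L. submodule M L \<and> X \<subseteq> L \<and> msum M K L = mcarrier M \<longrightarrow> L = mcarrier M)"

context rmodule
begin

lemma small_quot_iff:
  assumes X: "submodule M X" and K: "submodule M K" and XK: "X \<subseteq> K"
  shows "small (quot M X) (coset M X ` K) \<longleftrightarrow> small_over M X K"
proof
  have Kc: "K \<subseteq> mcarrier M" using submoduleD(1)[OF K] .
  assume small: "small (quot M X) (coset M X ` K)"
  show "small_over M X K" unfolding small_over_def
  proof (intro allI impI)
    fix L assume L: "submodule M L \<and> X \<subseteq> L \<and> msum M K L = mcarrier M"
    have "msum (quot M X) (coset M X ` K) (coset M X ` L) = mcarrier (quot M X)"
      using L msum_quot[OF X Kc] submoduleD(1) by simp
    then have "coset M X ` L = coset M X ` mcarrier M"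
      using small submodule_quot_image[OF X] L unfolding small_def by simp
    then show "L = mcarrier M" using coset_image_eq_carrier[OF X] L by blast
  qed
next
  have Kc: "K \<subseteq> mcarrier M" using submoduleD(1)[OF K] .
  assume small: "small_over M X K"
  show "small (quot M X) (coset M X ` K)" unfolding small_def
  proof (intro conjI allI impI)
    show "submodule (quot M X) (coset M X ` K)" using submodule_quot_image[OF X K] .
    fix N assume N: "submodule (quot M X) N \<and>
      msum (quot M X) (coset M X ` K) N = mcarrier (quot M X)"
    obtain L where L: "submodule M L" "X \<subseteq> L" "N = coset M X ` L"
      using quot_submodule_preimage[OF X] N by blast
    have KL: "submodule M (msum M K L)" using submodule_msum[OF K L(1)] .
    have "X \<subseteq> msum M K L" using L(2) msum_upper2[OF K submoduleD(1)[OF L(1)]] by blast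
    moreover have "coset M X ` msum M K L = coset M X ` mcarrier M"
      using N L msum_quot[OF X Kc submoduleD(1)[OF L(1)]] by simp
    ultimately have "msum M K L = mcarrier M" using coset_image_eq_carrier[OF X KL] by blast
    then have "L = mcarrier M" using small L unfolding small_over_def by blast
    then show "N = mcarrier (quot M X)" using L(3) by simp
  qed
qed

lemma beta_star_iff:
  assumes X: "submodule M X" and Y: "submodule M Y"
  shows "beta_star M X Y \<longleftrightarrow> small_over M X (msum M X Y) \<and> small_over M Y (msum M X Y)"
  unfolding beta_star_def
  using small_quot_iff[OF X submodule_msum[OF X Y] msum_upper1[OF Y submoduleD(1)[OF X]]]
    small_quot_iff[OF Y submodule_msum[OF X Y] msum_upper2[OF X submoduleD(1)[OF Y]]]
  by simp

end

lemma submod_simps[simp]: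
  "mcarrier (submod M N) = N" "mzero (submod M N) = mzero M" "madd (submod M N) = madd M"
  "mneg (submod M N) = mneg M" "msmul (submod M N) = msmul M"
  by (simp_all add: submod_def)

lemma msum_submod[simp]: "msum (submod M N) = msum M"
  by (simp add: msum_def fun_eq_iff)

lemma submodule_submod:
  "submodule M N \<Longrightarrow> submodule (submod M N) L \<longleftrightarrow> submodule M L \<and> L \<subseteq> N"
  unfolding submodule_def by auto

lemma cyclic_submodule_submod:
  "submodule M N \<Longrightarrow> cyclic_submodule (submod M N) X \<Longrightarrow> cyclic_submodule M X \<and> X \<subseteq> N"
  unfolding cyclic_submodule_def submodule_def by auto

lemma (in rmodule) rmodule_submod:
  assumes "submodule M N" shows "rmodule (submod M N)"
proof -
  have r: "right_module M" by (rule rm)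
  have n: "N \<subseteq> mcarrier M" "mzero M \<in> N" "\<forall>x\<in>N. \<forall>y\<in>N. madd M x y \<in> N"
    "\<forall>x\<in>N. mneg M x \<in> N" "\<forall>x\<in>N. \<forall>r. msmul M x r \<in> N"
    using assms unfolding submodule_def by auto
  show ?thesis unfolding rmodule_def right_module_def submod_simps
  proof (intro conjI)
  qed (use r n in \<open>auto simp: right_module_def subset_iff\<close>)
qed

section \<open>Complements\<close>

definition complements :: "('r, 'm) rmod \<Rightarrow> 'm set \<Rightarrow> 'm set \<Rightarrow> bool" where
  "complements M D E \<longleftrightarrow> submodule M D \<and> submodule M E \<and>
     msum M D E = mcarrier M \<and> D \<inter> E = {mzero M}"

lemma direct_summand_iff: "direct_summand M D \<longleftrightarrow> (\<exists>E. complements M D E)"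
  unfolding direct_summand_def complements_def by blast

context rmodule
begin

lemma complements_sym: "complements M D E \<Longrightarrow> complements M E D"
  unfolding complements_def using msum_comm submoduleD(1) by (metis Int_commute)

lemma complement_unique_below:
  assumes DE0: "complements M D E0" and L: "submodule M L" "L \<subseteq> D"
    and LE0: "msum M L E0 = mcarrier M"
  shows "L = D"
proof -
  have D: "submodule M D" and E0: "submodule M E0" and DE0_zero: "D \<inter> E0 = {mzero M}"
    using DE0 unfolding complements_def by auto
  have "D = D \<inter> msum M L E0" using LE0 submoduleD(1)[OF D] by blast
  also have "\<dots> = msum M L (D \<inter> E0)" by (rule modular[OF L(1) E0 D L(2)])
  also have "\<dots> = L" using DE0_zero msum_zero submoduleD(1)[OF L(1)] by simp
  finally show ?thesis by simp
qed

lemma complement_restrict: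
  assumes DE0: "complements M D E0" and AE: "complements M A E" and E0A: "E0 \<subseteq> A"
  shows "msum M (D \<inter> A) E0 = A" and "direct_summand (submod M D) (D \<inter> A)"
proof -
  have D: "submodule M D" and E0: "submodule M E0" and A: "submodule M A" and E: "submodule M E"
    using DE0 AE unfolding complements_def by auto
  note carrier = submoduleD(1)[OF D] submoduleD(1)[OF E0] submoduleD(1)[OF A] submoduleD(1)[OF E]
  define D' where "D' = D \<inter> A"
  define F where "F = D \<inter> msum M E E0"
  have D': "submodule M D'" unfolding D'_def using submodule_Int[OF D A] .
  have F: "submodule M F" unfolding F_def using submodule_Int[OF D submodule_msum[OF E E0]] .
  have "msum M E0 D = mcarrier M"
    using DE0 msum_comm[OF carrier(2,1)] unfolding complements_def by simp
  then have "A = A \<inter> msum M E0 D" using carrier(3) by blast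
  also have "\<dots> = msum M E0 (A \<inter> D)" by (rule modular[OF E0 D A E0A])
  also have "\<dots> = msum M (D \<inter> A) E0"
    using msum_comm[OF carrier(2), of "D \<inter> A"] carrier(1) by (auto simp: Int_commute)
  finally show D'E0: "msum M (D \<inter> A) E0 = A" by simp
  have "msum M D' (msum M E E0) = mcarrier M"
  proof
    show "msum M D' (msum M E E0) \<subseteq> mcarrier M" using D' submoduleD(1) carrier
      by (intro msum_carrier msum_carrier) auto
    have "A \<subseteq> msum M D' (msum M E E0)"
      using D'E0 msum_mono[of D' D' E0 "msum M E E0" M] msum_upper2[OF E carrier(2)]
      unfolding D'_def by blast
    moreover have "E \<subseteq> msum M D' (msum M E E0)"
      using msum_upper2[OF D' msum_carrier] msum_upper1[OF E0 carrier(4)] carrier by blast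
    ultimately show "mcarrier M \<subseteq> msum M D' (msum M E E0)"
      using AE msum_least[OF submodule_msum[OF D' submodule_msum[OF E E0]]]
      unfolding complements_def by metis
  qed
  moreover have "D \<inter> msum M D' (msum M E E0) = msum M D' F"
    unfolding F_def using modular[OF D' submodule_msum[OF E E0] D] D'_def by blast
  ultimately have D'F: "msum M D' F = D" using carrier by (simp add: Int_absorb2)
  have "D' \<inter> F \<subseteq> {mzero M}"
  proof
    fix z assume z: "z \<in> D' \<inter> F"
    then obtain e n where en: "z = madd M e n" "e \<in> E" "n \<in> E0"
      unfolding F_def by (auto elim!: msumE)
    have c: "e \<in> mcarrier M" "n \<in> mcarrier M" using en carrier by auto
    have "madd M z (mneg M n) \<in> A"
      using z en E0A submoduleD(3,4)[OF A] unfolding D'_def by blast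
    then have "e \<in> A \<inter> E" using en c by simp
    then have "e = mzero M" using AE unfolding complements_def by blast
    then have "z \<in> D \<inter> E0" using z en c unfolding D'_def by simp
    then show "z \<in> {mzero M}" using DE0 unfolding complements_def by blast
  qed
  then have "D' \<inter> F = {mzero M}" using submoduleD(2)[OF D'] submoduleD(2)[OF F] by blast
  then show "direct_summand (submod M D) (D \<inter> A)"
    unfolding direct_summand_def submodule_submod[OF D] D'_def[symmetric]
    using D' F D'F by (auto simp: D'_def F_def)
qed

section \<open>Transferring beta* to a direct summand\<close>

text \<open>Let M = D \<oplus> E0.  Smallness over Z of K' in M passes to smallness over Z' of K in D,
  provided Z \<le> Z' + E0 and K \<le> K' + E0: a submodule L \<le> D with Z' \<le> L and K + L = D
  gives the submodule L + E0 of M with Z \<le> L + E0 and K' + (L + E0) = M.\<close>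
lemma small_over_restrict:
  assumes DE0: "complements M D E0"
    and Z': "Z' \<subseteq> D" and K': "submodule M K'" and K: "K \<subseteq> D"
    and ZZ': "Z \<subseteq> msum M Z' E0" and KK': "K \<subseteq> msum M K' E0"
    and small: "small_over M Z K'"
  shows "small_over (submod M D) Z' K"
proof -
  have D: "submodule M D" and E0: "submodule M E0"
    using DE0 unfolding complements_def by auto
  have "L = D" if L: "submodule M L" "L \<subseteq> D" "Z' \<subseteq> L" "msum M K L = D" for L
  proof -
    define T where "T = msum M L E0"
    have T: "submodule M T" unfolding T_def using submodule_msum[OF L(1) E0] .
    have LT: "L \<subseteq> T" and E0T: "E0 \<subseteq> T"
      unfolding T_def using msum_upper1[OF E0] msum_upper2[OF L(1)] submoduleD(1) L(1) E0
      by auto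
    have K'T: "submodule M (msum M K' T)" using submodule_msum[OF K' T] .
    have T_in: "T \<subseteq> msum M K' T" using msum_upper2[OF K' submoduleD(1)[OF T]] .
    have "Z \<subseteq> T" using ZZ' msum_mono[OF L(3) order_refl, of M E0] unfolding T_def by blast
    moreover have "msum M K' T = mcarrier M"
    proof
      show "msum M K' T \<subseteq> mcarrier M" using submoduleD(1)[OF K'T] .
      have "K \<subseteq> msum M K' T" using KK' msum_mono[OF order_refl E0T, of M K'] by blast
      then have "D \<subseteq> msum M K' T" using L(4) msum_least[OF K'T _ order_trans[OF LT T_in]] by blast
      then show "mcarrier M \<subseteq> msum M K' T"
        using DE0 msum_least[OF K'T _ order_trans[OF E0T T_in]] unfolding complements_def by metis
    qed
    ultimately have "T = mcarrier M" using small T unfolding small_over_def by blast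
    then show "L = D" using complement_unique_below[OF DE0 L(1,2)] unfolding T_def by blast
  qed
  then show ?thesis unfolding small_over_def submodule_submod[OF D] by auto
qed

lemma beta_star_restrict:
  assumes DE0: "complements M D E0"
    and X: "submodule M X" "X \<subseteq> D" and D': "submodule M D'" "D' \<subseteq> D" and P: "submodule M P"
    and PD': "P \<subseteq> msum M D' E0" and D'P: "D' \<subseteq> msum M P E0"
    and beta: "beta_star M X P"
  shows "beta_star (submod M D) X D'"
proof -
  have D: "submodule M D" and E0: "submodule M E0"
    using DE0 unfolding complements_def by auto
  interpret D: rmodule "submod M D" using rmodule_submod[OF D] .
  have XP: "submodule M (msum M X P)" using submodule_msum[OF X(1) P] .
  have XD'_in: "msum M X D' \<subseteq> D" using msum_least[OF D X(2) D'(2)] .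
  have XPE0: "submodule M (msum M (msum M X P) E0)" using submodule_msum[OF XP E0] .
  have XP_in: "msum M X P \<subseteq> msum M (msum M X P) E0"
    using msum_upper1[OF E0 submoduleD(1)[OF XP]] .
  have "X \<subseteq> msum M (msum M X P) E0"
    using XP_in msum_upper1[OF P submoduleD(1)[OF X(1)]] by blast
  moreover have "D' \<subseteq> msum M (msum M X P) E0"
    using D'P msum_mono[OF msum_upper2[OF X(1) submoduleD(1)[OF P]] order_refl, of M E0] by blast
  ultimately have XD'_XP: "msum M X D' \<subseteq> msum M (msum M X P) E0"
    using msum_least[OF XPE0] by blast
  have X_XE0: "X \<subseteq> msum M X E0" using msum_upper1[OF E0 submoduleD(1)[OF X(1)]] .
  have "small_over M X (msum M X P)" "small_over M P (msum M X P)"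
    using beta beta_star_iff[OF X(1) P] by auto
  then have "small_over (submod M D) X (msum M X D')" "small_over (submod M D) D' (msum M X D')"
    using small_over_restrict[OF DE0 X(2) XP XD'_in X_XE0 XD'_XP]
      small_over_restrict[OF DE0 D'(2) XP XD'_in PD' XD'_XP] by auto
  then show ?thesis
    using D.beta_star_iff submodule_submod[OF D] X D' by simp
qed

end

theorem proposition3p12:
  fixes M :: "('r::ring_1, 'm) rmod" and D :: "'m set"
  assumes "right_module M"
    and "principally_goldie_star_lifting M"
    and "SSP M"
    and "direct_summand M D"
  shows "principally_goldie_star_lifting (submod M D)"
  unfolding principally_goldie_star_lifting_def
proof (intro allI impI)
  interpret rmodule M using assms(1) by (rule rmodule.intro)
  obtain E0 where DE0: "complements M D E0" using assms(4) direct_summand_iff by blast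
  have D: "submodule M D" and E0: "submodule M E0" using DE0 complements_def by auto
  fix X assume "cyclic_submodule (submod M D) X"
  then have cX: "cyclic_submodule M X" and XD: "X \<subseteq> D"
    using cyclic_submodule_submod[OF D] by auto
  obtain P where P: "direct_summand M P" "beta_star M X P"
    using assms(2) cX unfolding principally_goldie_star_lifting_def by blast
  have Ps: "submodule M P" using P(1) direct_summand_def by blast
  have "direct_summand M (msum M P E0)"
    using assms(3) P(1) complements_sym[OF DE0] unfolding SSP_def direct_summand_iff by blast
  then obtain E where PE0: "complements M (msum M P E0) E" using direct_summand_iff by blast
  let ?D' = "D \<inter> msum M P E0"
  have E0_in: "E0 \<subseteq> msum M P E0" using msum_upper2[OF Ps submoduleD(1)[OF E0]] .
  have D'E0: "msum M ?D' E0 = msum M P E0" and summand: "direct_summand (submod M D) ?D'"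
    using complement_restrict[OF DE0 PE0 E0_in] by auto
  have "beta_star (submod M D) X ?D'"
  proof (rule beta_star_restrict[OF DE0 _ XD _ _ Ps _ _ P(2)])
    show "submodule M X" using cyclic_submodule_is_submodule[OF cX] .
    show "submodule M ?D'" using submodule_Int[OF D submodule_msum[OF Ps E0]] .
    show "P \<subseteq> msum M ?D' E0" using D'E0 msum_upper1[OF E0 submoduleD(1)[OF Ps]] by simp
  qed auto
  then show "\<exists>D'. direct_summand (submod M D) D' \<and> beta_star (submod M D) X D'"
    using summand by blast
qed

end
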